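(* In the setting of the context, \[ \sum_{n=0}^\infty\big[\mathrm T^n\boldsymbol v\big]_{\boldsymbol 0}=\sum_{r\in C}\pi_r\int_{(-1,1)}\log\|B_r\psi(x)\|_1\,d\eta^C_r(x), \] where $\psi(x)=\frac12(1+x,\,1-x)^\top$ and $\|\cdot\|_1$ is the $\ell^1$ norm.
   Context: Setting (construction of the paper): $X$ finite, $P$ irreducible row-stochastic, $\Sigma=\{x\in X^{\mathbb N_0}:P_{x_nx_{n+1}}>0\}$, $\{A_i\}_{i\in X}\subset\mathrm{GL}_2(\mathbb R)$ projectively uniformly hyperbolic w.r.t. $\Sigma$ (continuous invariant splitting $\mathbb R^2=E^d\oplus E^w$ into lines over $\widehat\Sigma=\{(x_n)_{n\in\mathbb Z}:P_{x_nx_{n+1}}>0\}$, $A_{x_0}E^*(\hat x)=E^*(\widehat\sigma\hat x)$, with $\|A_{x_{n-1}}\cdots A_{x_0}|_{E^w}\|<\|A_{x_{n-1}}\cdots A_{x_0}|_{E^d}\|$ for some $n$). A multicone $\{M_i\}$ is fixed (non-empty proper finite unions of open intervals in $\mathbb{RP}^1$, $\overline{[A_j](M_i)}\subset M_j$ when $P_{ij}>0$), components $M_{i,a}$; $\beta(i,a,j)$ the unique $b$ with $[A_j](\overline{M_{i,a}})\subset M_{j,b}$; $R=\{((i,a),(j,b)):P_{ij}>0,\ b=\beta(i,a,j)\}$, $s(r)=(i,a)$, $t(r)=(j,b)$, $\tau(r)=j$; $Q_{r,r'}=P_{\tau(r)\tau(r')}$ if $t(r)=s(r')$ else $0$; $C$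 a fixed recurrent class. $L_{i,a}$ maps the projective non-negative cone onto $\overline{M_{i,a}}$; $B_r=\pm L_{t(r)}^{-1}A_{\tau(r)}L_{s(r)}$ entrywise positive. If the period of $Q|_C$ is $d>1$, $C,Q,B$ are replaced by the $d$-step system on words through the cyclic classes ($Q_{c,c'}=Q_{c_{d-1}c'_0}Q_{c'_0c'_1}\cdots Q_{c'_{d-2}c'_{d-1}}$, $B_c=B_{c_{d-1}}\cdots B_{c_0}$), keeping names; $\pi$ is the stationary vector of the resulting irreducible aperiodic $Q|_C$. Möbius data: for $B_r=\begin{pmatrix}a_r&b_r\\c_r&d_r\end{pmatrix}$, $\alpha_r=\frac12(a_r-b_r-c_r+d_r)$, $\beta_r=\frac12(a_r+b_r-c_r-d_r)$, $\gamma_r=\frac12(a_r-b_r+c_r-d_r)$, $\delta_r=\frac12(a_r+b_r+c_r+d_r)$; $f_r(x)=\frac{\alpha_rx+\beta_r}{\gamma_rx+\delta_r}$, $f_r^\top(0)=\gamma_r/\delta_r$, $\ell_r(x)=\mathrm{Log}(\gamma_rx+\delta_r)$. Operators: $b^{(r)}_{k,0}=0$, $b^{(r)}_{0,n}=(f_r^\top(0))^n$ ($n\ge1$), $b^{(r)}_{k,n}=\sum_{\ell=1}^{\min\{k,n\}}\binom n\ell\binom{k-1}{\ell-1}(f_r^\top(0))^{n-\ell}(-f_r(0))^{k-\ell}(f_r'(0))^\ell$ ($k,n\ge1$); $v(x;c)\in\ell^\infty(\mathbb N_0)$ has entry $c$ at $0$ and $-(-x)^n/n$ at $n\ge1$ ($|x|\le1$,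 $c\in\mathbb C$); $V$ the span of such vectors; $(T_ru)_k=\sum_nb^{(r)}_{k,n}u_n$ on $V$; on $V_C=\bigoplus_{r\in C}V$, $(\mathrm T\boldsymbol u)_{r'}=\sum_r\frac{\pi_rQ_{r,r'}}{\pi_{r'}}T_ru_r$; seed $\boldsymbol v_s=\sum_r\frac{\pi_rQ_{r,s}}{\pi_s}v(f_r(0);\ell_r(0))$; $[\boldsymbol w]_{\boldsymbol 0}=\sum_r\pi_r(w_r)_0$. Measures: $d_{\mathrm{hyp}}(x,y)=2|\mathrm{artanh}\,x-\mathrm{artanh}\,y|$; $\mathscr P_1(-1,1)$ = Borel probability measures on $(-1,1)$ with finite first $d_{\mathrm{hyp}}$-moment, Wasserstein-1 metric $W_1$ for $d_{\mathrm{hyp}}$; $\mathscr P_1^C=\prod_r\mathscr P_1(-1,1)$ with $\mathcal W(\eta,\zeta)=\sum_r\pi_rW_1(\eta_r,\zeta_r)$; $\eta^C$ is the unique fixed point in $\mathscr P_1^C$ of $(\mathscr H\eta)_{r'}=\sum_r\frac{\pi_rQ_{r,r'}}{\pi_{r'}}(f_r)_*\eta_r$. *)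

theory Defs
  imports "HOL-Probability.Probability"
begin

fun qpow :: "'r set \<Rightarrow> ('r \<Rightarrow> 'r \<Rightarrow> real) \<Rightarrow> nat \<Rightarrow> 'r \<Rightarrow> 'r \<Rightarrow> real" where
  "qpow C Q 0 r r' = (if r = r' then 1 else 0)"
| "qpow C Q (Suc n) r r' = (\<Sum>m\<in>C. qpow C Q n r m * Q m r')"

text \<open>Q restricted to C is a row-stochastic, irreducible and aperiodic (= primitive) matrix.\<close>
definition stoch_irred_aperiodic :: "'r set \<Rightarrow> ('r \<Rightarrow> 'r \<Rightarrow> real) \<Rightarrow> bool" where
  "stoch_irred_aperiodic C Q \<longleftrightarrow>
     finite C \<and> C \<noteq> {} \<and>
     (\<forall>r\<in>C. \<forall>r'\<in>C. Q r r' \<ge> 0) \<and>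
     (\<forall>r\<in>C. (\<Sum>r'\<in>C. Q r r') = 1) \<and>
     (\<exists>N. \<forall>n\<ge>N. \<forall>r\<in>C. \<forall>r'\<in>C. qpow C Q n r r' > 0)"

definition stationary :: "'r set \<Rightarrow> ('r \<Rightarrow> 'r \<Rightarrow> real) \<Rightarrow> ('r \<Rightarrow> real) \<Rightarrow> bool" where
  "stationary C Q \<pi> \<longleftrightarrow> (\<forall>r\<in>C. \<pi> r \<ge> 0) \<and> (\<Sum>r\<in>C. \<pi> r) = 1 \<and>
     (\<forall>s\<in>C. (\<Sum>r\<in>C. \<pi> r * Q r s) = \<pi> s)"

definition entrywise_positive :: "real^2^2 \<Rightarrow> bool" where
  "entrywise_positive M \<longleftrightarrow> (\<forall>i j. M $ i $ j > 0)"

definition mA :: "real^2^2 \<Rightarrow> real" where "mA M = M $ 1 $ 1"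
definition mB :: "real^2^2 \<Rightarrow> real" where "mB M = M $ 1 $ 2"
definition mC :: "real^2^2 \<Rightarrow> real" where "mC M = M $ 2 $ 1"
definition mD :: "real^2^2 \<Rightarrow> real" where "mD M = M $ 2 $ 2"

definition mob_alpha :: "real^2^2 \<Rightarrow> real" where
  "mob_alpha M = (mA M - mB M - mC M + mD M) / 2"
definition mob_beta :: "real^2^2 \<Rightarrow> real" where
  "mob_beta M = (mA M + mB M - mC M - mD M) / 2"
definition mob_gamma :: "real^2^2 \<Rightarrow> real" where
  "mob_gamma M = (mA M - mB M + mC M - mD M) / 2"
definition mob_delta :: "real^2^2 \<Rightarrow> real" where
  "mob_delta M = (mA M + mB M + mC M + mD M) / 2"

definition mob_f :: "real^2^2 \<Rightarrow> real \<Rightarrow> real" where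
  "mob_f M x = (mob_alpha M * x + mob_beta M) / (mob_gamma M * x + mob_delta M)"

definition mob_fT0 :: "real^2^2 \<Rightarrow> real" where
  "mob_fT0 M = mob_gamma M / mob_delta M"

definition mob_ell :: "real^2^2 \<Rightarrow> real \<Rightarrow> complex" where
  "mob_ell M x = Ln (complex_of_real (mob_gamma M * x + mob_delta M))"

definition bcoef :: "real^2^2 \<Rightarrow> nat \<Rightarrow> nat \<Rightarrow> complex" where
  "bcoef M k n =
     (if n = 0 then 0
      else if k = 0 then complex_of_real (mob_fT0 M ^ n)
      else complex_of_real
        (\<Sum>l=1..min k n. real (n choose l) * real ((k - 1) choose (l - 1)) *
            (mob_fT0 M) ^ (n - l) * (- mob_f M 0) ^ (k - l) * (deriv (mob_f M) 0) ^ l))"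

definition vvec :: "real \<Rightarrow> complex \<Rightarrow> nat \<Rightarrow> complex" where
  "vvec x c n = (if n = 0 then c else complex_of_real (- ((- x) ^ n) / real n))"

definition Top :: "real^2^2 \<Rightarrow> (nat \<Rightarrow> complex) \<Rightarrow> nat \<Rightarrow> complex" where
  "Top M u k = (\<Sum>n. bcoef M k n * u n)"

definition Tsys :: "'r set \<Rightarrow> ('r \<Rightarrow> real) \<Rightarrow> ('r \<Rightarrow> 'r \<Rightarrow> real) \<Rightarrow> ('r \<Rightarrow> real^2^2)
    \<Rightarrow> ('r \<Rightarrow> nat \<Rightarrow> complex) \<Rightarrow> 'r \<Rightarrow> nat \<Rightarrow> complex" where
  "Tsys C \<pi> Q B U r' k =
     (\<Sum>r\<in>C. complex_of_real (\<pi> r * Q r r' / \<pi> r') * Top (B r) (U r) k)"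

definition vseed :: "'r set \<Rightarrow> ('r \<Rightarrow> real) \<Rightarrow> ('r \<Rightarrow> 'r \<Rightarrow> real) \<Rightarrow> ('r \<Rightarrow> real^2^2)
    \<Rightarrow> 'r \<Rightarrow> nat \<Rightarrow> complex" where
  "vseed C \<pi> Q B s k =
     (\<Sum>r\<in>C. complex_of_real (\<pi> r * Q r s / \<pi> s) *
        vvec (mob_f (B r) 0) (mob_ell (B r) 0) k)"

definition bracket0 :: "'r set \<Rightarrow> ('r \<Rightarrow> real) \<Rightarrow> ('r \<Rightarrow> nat \<Rightarrow> complex) \<Rightarrow> complex" where
  "bracket0 C \<pi> W = (\<Sum>r\<in>C. complex_of_real (\<pi> r) * W r 0)"

definition d_hyp :: "real \<Rightarrow> real \<Rightarrow> real" where
  "d_hyp x y = 2 * \<bar>artanh x - artanh y\<bar>"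

text \<open>Borel probability measures on (-1,1) (as Borel measures on the reals
  carried by (-1,1)) with finite first d_hyp-moment.\<close>
definition P1 :: "real measure \<Rightarrow> bool" where
  "P1 \<mu> \<longleftrightarrow> prob_space \<mu> \<and> sets \<mu> = sets borel \<and>
     emeasure \<mu> (UNIV - {-1<..<1}) = 0 \<and> integrable \<mu> (\<lambda>x. d_hyp x 0)"

definition H_fixed :: "'r set \<Rightarrow> ('r \<Rightarrow> real) \<Rightarrow> ('r \<Rightarrow> 'r \<Rightarrow> real) \<Rightarrow> ('r \<Rightarrow> real^2^2)
    \<Rightarrow> ('r \<Rightarrow> real measure) \<Rightarrow> bool" where
  "H_fixed C \<pi> Q B \<eta> \<longleftrightarrow>
     (\<forall>r'\<in>C. \<forall>A\<in>sets borel.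
        measure (\<eta> r') A = (\<Sum>r\<in>C. \<pi> r * Q r r' / \<pi> r' * measure (\<eta> r) (mob_f (B r) -` A)))"

definition psi :: "real \<Rightarrow> real^2" where
  "psi x = vector [(1 + x) / 2, (1 - x) / 2]"

definition norm1 :: "real^2 \<Rightarrow> real" where
  "norm1 v = (\<Sum>i\<in>UNIV. \<bar>v $ i\<bar>)"

end

theory Submission
  imports Defs "HOL-Analysis.Generalised_Binomial_Theorem"
begin

text \<open>
  Let \<open>p r s = \<pi> r Q r s / \<pi> s\<close> be the kernel of the reversed chain. Writing
  \<open>f_r x = f_r 0 + f_r'(0) x / (1 + f_r\<^sup>\<top>(0) x)\<close> and expanding with the negative binomial series
  shows that \<open>T_r\<close> acts on the vectors \<open>v(x;c)\<close>, \<open>|x| < 1\<close>, as composition with the Moebius map: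
  \<open>T_r v(x;c) = v(f_r x; \<ell>_r x) - v(f_r 0; \<ell>_r 0)\<close>. Hence \<open>T^n v\<close> telescopes and its
  bracket is \<open>X n - X (n - 1)\<close>, where \<open>X n = \<Sum>r. \<pi> r \<integral>\<ell>_r d(H^n \<delta>_0)_r\<close>. Every \<open>f_r\<close>
  is a strict contraction of \<open>d_hyp\<close> and \<open>\<ell>_r\<close> is \<open>1\<close>-Lipschitz for it, so the fixed
  point property of \<open>\<eta>\<close> gives \<open>X n \<longrightarrow> \<Sum>r. \<pi> r \<integral>\<ell>_r d\<eta>_r\<close> at a geometric rate.
  Finally \<open>\<ell>_r x = log \<parallel>B_r \<psi>(x)\<parallel>\<^sub>1\<close> because \<open>B_r\<close> is positive.
\<close>

abbreviation I1 :: "real set" where "I1 \<equiv> {-1<..<1}"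

section \<open>The Moebius map of a positive matrix\<close>

lemma entrywise_positive_entries:
  assumes "entrywise_positive M"
  shows "mA M > 0" "mB M > 0" "mC M > 0" "mD M > 0"
  using assms unfolding entrywise_positive_def mA_def mB_def mC_def mD_def by auto

lemma mob_denom_eq:
  "mob_gamma M * x + mob_delta M = ((mA M + mC M) * (1 + x) + (mB M + mD M) * (1 - x)) / 2"
  unfolding mob_gamma_def mob_delta_def by (simp add: field_simps)

lemma pos_combination_pos:
  fixes p q x :: real
  assumes "p > 0" "q > 0" "\<bar>x\<bar> \<le> 1"
  shows "p * (1 + x) + q * (1 - x) > 0"
proof (cases "x = 1")
  case False
  with assms have "p * (1 + x) \<ge> 0" "q * (1 - x) > 0" by (auto simp: abs_le_iff)
  then show ?thesis by linarith
qed (use assms in simp)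

lemma mob_denom_pos:
  assumes "entrywise_positive M" "\<bar>x\<bar> \<le> 1"
  shows "mob_gamma M * x + mob_delta M > 0"
proof -
  have "(mA M + mC M) * (1 + x) + (mB M + mD M) * (1 - x) > 0"
    using entrywise_positive_entries[OF assms(1)] by (intro pos_combination_pos assms(2)) auto
  then show ?thesis unfolding mob_denom_eq by simp
qed

lemma mob_delta_pos: "entrywise_positive M \<Longrightarrow> mob_delta M > 0"
  using mob_denom_pos[of M 0] by simp

lemma abs_mob_gamma_less: "entrywise_positive M \<Longrightarrow> \<bar>mob_gamma M\<bar> < mob_delta M"
  using entrywise_positive_entries[of M] unfolding mob_gamma_def mob_delta_def by auto

lemma abs_mob_fT0_mult_less:
  assumes M: "entrywise_positive M" and x: "\<bar>x\<bar> < 1"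
  shows "\<bar>mob_fT0 M * x\<bar> < 1"
proof -
  have "\<bar>mob_fT0 M\<bar> < 1"
    using abs_mob_gamma_less[OF M] mob_delta_pos[OF M] by (simp add: mob_fT0_def abs_divide)
  then have "\<bar>mob_fT0 M\<bar> * \<bar>x\<bar> \<le> \<bar>x\<bar>" by (simp add: mult_left_le_one_le)
  then show ?thesis using x by (simp add: abs_mult)
qed

lemma one_plus_mob_f:
  "mob_gamma M * x + mob_delta M \<noteq> 0 \<Longrightarrow>
   1 + mob_f M x = (mA M * (1 + x) + mB M * (1 - x)) / (mob_gamma M * x + mob_delta M)"
  unfolding mob_f_def mob_alpha_def mob_beta_def mob_gamma_def mob_delta_def
  by (simp add: field_simps)

lemma one_minus_mob_f:
  "mob_gamma M * x + mob_delta M \<noteq> 0 \<Longrightarrow>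
   1 - mob_f M x = (mC M * (1 + x) + mD M * (1 - x)) / (mob_gamma M * x + mob_delta M)"
  unfolding mob_f_def mob_alpha_def mob_beta_def mob_gamma_def mob_delta_def
  by (simp add: field_simps)

lemma abs_mob_f_less:
  assumes "entrywise_positive M" "\<bar>x\<bar> \<le> 1"
  shows "\<bar>mob_f M x\<bar> < 1"
proof -
  note pos = entrywise_positive_entries[OF assms(1)]
  have d: "mob_gamma M * x + mob_delta M > 0" using mob_denom_pos[OF assms] .
  have "1 + mob_f M x > 0"
    using one_plus_mob_f[of M x] d pos_combination_pos[OF pos(1,2) assms(2)] by simp
  moreover have "1 - mob_f M x > 0"
    using one_minus_mob_f[of M x] d pos_combination_pos[OF pos(3,4) assms(2)] by simp
  ultimately show ?thesis by linarith
qed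

lemma mob_f_maps_I1:
  "entrywise_positive M \<Longrightarrow> x \<in> I1 \<Longrightarrow> mob_f M x \<in> I1"
  using abs_mob_f_less[of M x] by (auto simp: abs_less_iff)

lemma deriv_mob_f_0:
  assumes "mob_delta M > 0"
  shows "deriv (mob_f M) 0 =
    (mob_alpha M * mob_delta M - mob_beta M * mob_gamma M) / (mob_delta M)\<^sup>2"
proof -
  have "(mob_f M has_real_derivative
          (mob_alpha M * mob_delta M - mob_beta M * mob_gamma M) / (mob_delta M)\<^sup>2) (at 0)"
    unfolding mob_f_def[abs_def] using assms
    by (auto intro!: derivative_eq_intros simp: power2_eq_square)
  then show ?thesis by (rule DERIV_imp_deriv)
qed

lemma mob_f_eq_expansion:
  assumes M: "entrywise_positive M" and x: "\<bar>x\<bar> \<le> 1"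
  shows "mob_f M x = mob_f M 0 + deriv (mob_f M) 0 * x / (1 + mob_fT0 M * x)"
proof -
  have d0: "mob_delta M > 0" using mob_delta_pos[OF M] .
  have d: "mob_gamma M * x + mob_delta M > 0" using mob_denom_pos[OF assms] .
  have e: "1 + mob_fT0 M * x = (mob_gamma M * x + mob_delta M) / mob_delta M"
    unfolding mob_fT0_def using d0 by (simp add: field_simps)
  have "mob_f M x - mob_f M 0 = (mob_alpha M * mob_delta M - mob_beta M * mob_gamma M) * x
      / (mob_delta M * (mob_gamma M * x + mob_delta M))"
    unfolding mob_f_def using d0 d by (simp add: field_simps)
  moreover have "deriv (mob_f M) 0 * x / (1 + mob_fT0 M * x) =
      (mob_alpha M * mob_delta M - mob_beta M * mob_gamma M) * x
      / (mob_delta M * (mob_gamma M * x + mob_delta M))"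
    unfolding deriv_mob_f_0[OF d0] e using d0 d by (simp add: power2_eq_square)
  ultimately show ?thesis by simp
qed

definition mob_ln :: "real^2^2 \<Rightarrow> real \<Rightarrow> real" where
  "mob_ln M x = ln (mob_gamma M * x + mob_delta M)"

lemma mob_ell_eq_mob_ln:
  "entrywise_positive M \<Longrightarrow> \<bar>x\<bar> \<le> 1 \<Longrightarrow> mob_ell M x = complex_of_real (mob_ln M x)"
  unfolding mob_ell_def mob_ln_def by (rule Ln_of_real[OF mob_denom_pos])

lemma mob_ell_diff_0:
  assumes M: "entrywise_positive M" and x: "\<bar>x\<bar> \<le> 1"
  shows "mob_ell M x - mob_ell M 0 = complex_of_real (ln (1 + mob_fT0 M * x))"
proof -
  have d0: "mob_delta M > 0" using mob_delta_pos[OF M] .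
  have d: "mob_gamma M * x + mob_delta M > 0" using mob_denom_pos[OF M x] .
  have "1 + mob_fT0 M * x = (mob_gamma M * x + mob_delta M) / mob_delta M"
    unfolding mob_fT0_def using d0 by (simp add: field_simps)
  then have "ln (1 + mob_fT0 M * x) = mob_ln M x - mob_ln M 0"
    using d d0 by (simp add: ln_div mob_ln_def)
  then show ?thesis using mob_ell_eq_mob_ln[OF M] x by simp
qed

lemma norm1_mult_psi_eq:
  "norm1 (M *v psi x) =
     \<bar>mA M * ((1 + x) / 2) + mB M * ((1 - x) / 2)\<bar> + \<bar>mC M * ((1 + x) / 2) + mD M * ((1 - x) / 2)\<bar>"
  unfolding norm1_def psi_def matrix_vector_mult_def by (simp add: sum_2 mA_def mB_def mC_def mD_def)

lemma ln_norm1_mult_psi: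
  assumes M: "entrywise_positive M" and x: "\<bar>x\<bar> \<le> 1"
  shows "ln (norm1 (M *v psi x)) = mob_ln M x"
proof -
  have "(1 + x) / 2 \<ge> 0" "(1 - x) / 2 \<ge> 0" using x by auto
  with entrywise_positive_entries[OF M] have "norm1 (M *v psi x) =
      mA M * ((1 + x) / 2) + mB M * ((1 - x) / 2) + (mC M * ((1 + x) / 2) + mD M * ((1 - x) / 2))"
    unfolding norm1_mult_psi_eq by (simp add: abs_of_nonneg)
  also have "\<dots> = mob_gamma M * x + mob_delta M" unfolding mob_denom_eq by (simp add: field_simps)
  finally show ?thesis unfolding mob_ln_def by simp
qed

lemma borel_measurable_mob_f: "mob_f M \<in> borel_measurable borel"
  unfolding mob_f_def[abs_def] by measurable

lemma borel_measurable_mob_ln: "mob_ln M \<in> borel_measurable borel"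
  unfolding mob_ln_def[abs_def] by measurable

section \<open>The operator \<open>T\<^sub>r\<close> on the vectors \<open>v(x;c)\<close>\<close>

definition mob_vec :: "real^2^2 \<Rightarrow> real \<Rightarrow> nat \<Rightarrow> complex" where
  "mob_vec M x = vvec (mob_f M x) (mob_ell M x)"

lemma negative_binomial_sums:
  fixes z :: real
  assumes "\<bar>z\<bar> < 1"
  shows "(\<lambda>m. real ((m + l) choose m) * z ^ m) sums (1 / (1 - z) ^ Suc l)"
proof -
  have "\<bar>-z\<bar> < 1" using assms by simp
  from gen_binomial_real[OF this, of "- real (Suc l)"]
  have s: "(\<lambda>n. ((- real (Suc l)) gchoose n) * (-z) ^ n) sums (1 + - z) powr (- real (Suc l))" .
  have e: "((- real (Suc l)) gchoose n) * (-z) ^ n = real ((n + l) choose n) * z ^ n" for n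
  proof -
    have "((- real (Suc l)) gchoose n) = (-1) ^ n * ((real (Suc l) + of_nat n - 1) gchoose n)"
      by (rule gbinomial_minus)
    also have "real (Suc l) + of_nat n - 1 = of_nat (n + l)" by simp
    also have "(of_nat (n + l) gchoose n) = real ((n + l) choose n)"
      by (simp add: binomial_gbinomial)
    finally show ?thesis by (simp add: power_minus')
  qed
  have p: "(1 + - z) powr (- real (Suc l)) = 1 / (1 - z) ^ Suc l"
    using assms by (simp add: powr_minus powr_realpow divide_inverse del: of_nat_Suc)
  show ?thesis using s unfolding e p .
qed

lemma binomial_shift_sums:
  fixes t x :: real
  assumes "\<bar>t * x\<bar> < 1"
  shows "(\<lambda>n. real (n choose Suc l) * t ^ (n - Suc l) * (- ((- x) ^ n) / real n)) sums
           (- ((- x) ^ Suc l) / (real (Suc l) * (1 + t * x) ^ Suc l))"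
proof -
  let ?L = "Suc l"
  let ?f = "\<lambda>n. real (n choose Suc l) * t ^ (n - Suc l) * (- ((- x) ^ n) / real n)"
  let ?c = "- ((- x) ^ ?L) / real ?L"
  have "\<bar>- (t * x)\<bar> < 1" using assms by simp
  from sums_mult[OF negative_binomial_sums[OF this, of l], of ?c]
  have s: "(\<lambda>m. ?c * (real ((m + l) choose m) * (- (t * x)) ^ m)) sums (?c * (1 / (1 + t * x) ^ ?L))"
    by simp
  have e: "?f (i + ?L) = ?c * (real ((i + l) choose i) * (- (t * x)) ^ i)" for i
  proof -
    have "real (Suc l) * real (Suc (i + l) choose Suc l) = real (Suc (i + l)) * real ((i + l) choose l)"
      using Suc_times_binomial[of l "i + l"] by (metis of_nat_mult)
    moreover have "(i + l) choose l = (i + l) choose i"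
      using binomial_symmetric[of i "i + l"] by simp
    ultimately have c: "real (Suc (i + l) choose Suc l) / real (Suc (i + l)) = real ((i + l) choose i) / real (Suc l)"
      by (simp add: field_simps)
    have "?f (i + ?L) = real (Suc (i + l) choose Suc l) / real (Suc (i + l)) * (t ^ i * (- ((- x) ^ (i + ?L))))"
      by simp
    also have "\<dots> = real ((i + l) choose i) / real ?L * (t ^ i * (- ((- x) ^ (i + ?L))))"
      unfolding c ..
    also have "\<dots> = ?c * (real ((i + l) choose i) * (- (t * x)) ^ i)"
    proof -
      have "(- (t * x)) ^ i = t ^ i * (- x) ^ i" by (metis mult_minus_right power_mult_distrib)
      then show ?thesis by (simp add: power_add field_simps)
    qed
    finally show ?thesis .
  qed
  have "(\<lambda>i. ?f (i + ?L)) sums (?c * (1 / (1 + t * x) ^ ?L))"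
    using s unfolding e .
  then have "?f sums (?c * (1 / (1 + t * x) ^ ?L))"
    by (subst sums_zero_iff_shift[symmetric, of ?L]) auto
  then show ?thesis by (simp add: field_simps)
qed

lemma binomial_pole_sum:
  fixes a p t x :: real
  shows "(\<Sum>l=1..k. real ((k - 1) choose (l - 1)) * (- a) ^ (k - l) * p ^ l *
           (- ((- x) ^ l) / (real l * (1 + t * x) ^ l)))
         = - ((- (a + p * x / (1 + t * x))) ^ k) / real k + (- a) ^ k / real k"
proof -
  define w where "w = p * x / (1 + t * x)"
  have summand: "real ((k - 1) choose (l - 1)) * (- a) ^ (k - l) * p ^ l *
      (- ((- x) ^ l) / (real l * (1 + t * x) ^ l))
      = - (real (k choose l) * (- w) ^ l * (- a) ^ (k - l)) / real k" if "l \<in> {1..k}" for l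
  proof -
    have "k \<noteq> 0" "l \<noteq> 0" using that by auto
    then obtain k' l' where kl: "k = Suc k'" "l = Suc l'" by (meson not0_implies_Suc)
    have "real (Suc l') * real (Suc k' choose Suc l') = real (Suc k') * real (k' choose l')"
      using Suc_times_binomial[of l' k'] by (metis of_nat_mult)
    then have c: "real ((k - 1) choose (l - 1)) / real l = real (k choose l) / real k"
      unfolding kl by (simp add: field_simps)
    have "(- w) ^ l = p ^ l * (- x) ^ l / (1 + t * x) ^ l"
    proof -
      have "- w = p * (- x) / (1 + t * x)" unfolding w_def by simp
      then show ?thesis by (simp only: power_divide power_mult_distrib)
    qed
    then have "real ((k - 1) choose (l - 1)) * (- a) ^ (k - l) * p ^ l *
        (- ((- x) ^ l) / (real l * (1 + t * x) ^ l))
        = - (real ((k - 1) choose (l - 1)) / real l) * ((- w) ^ l * (- a) ^ (k - l))"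
      by simp
    then show ?thesis unfolding c by simp
  qed
  have binomial: "(\<Sum>l=1..k. real (k choose l) * (- w) ^ l * (- a) ^ (k - l)) = (- w + - a) ^ k - (- a) ^ k"
  proof -
    have "{..k} = insert 0 {1..k}" by auto
    then show ?thesis unfolding binomial_ring by (simp add: sum.insert)
  qed
  have "(\<Sum>l=1..k. real ((k - 1) choose (l - 1)) * (- a) ^ (k - l) * p ^ l *
           (- ((- x) ^ l) / (real l * (1 + t * x) ^ l)))
        = - (\<Sum>l=1..k. real (k choose l) * (- w) ^ l * (- a) ^ (k - l)) / real k"
    by (simp only: sum.cong[OF refl summand] sum_divide_distrib[symmetric] sum_negf)
  also have "\<dots> = - ((- (a + w)) ^ k) / real k + (- a) ^ k / real k"
    unfolding binomial by (simp add: diff_divide_distrib add_divide_distrib algebra_simps)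
  finally show ?thesis unfolding w_def .
qed

lemma bcoef_vvec_sums_0:
  assumes M: "entrywise_positive M" and x: "\<bar>x\<bar> < 1"
  shows "(\<lambda>n. bcoef M 0 n * vvec x c n) sums complex_of_real (ln (1 + mob_fT0 M * x))"
proof -
  let ?t = "mob_fT0 M"
  \<comment> \<open>at \<open>n = 0\<close> both sides vanish, the right one because \<open>x / 0 = 0\<close>\<close>
  have "(\<lambda>n. bcoef M 0 n * vvec x c n) = (\<lambda>n. complex_of_real (- ((- (?t * x)) ^ n) / real n))"
  proof
    fix n
    have "(- (?t * x)) ^ n = ?t ^ n * (- x) ^ n" by (metis mult_minus_right power_mult_distrib)
    then show "bcoef M 0 n * vvec x c n = complex_of_real (- ((- (?t * x)) ^ n) / real n)"
      by (simp add: bcoef_def vvec_def)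
  qed
  then show ?thesis
    using sums_of_real[OF ln_series'[OF abs_mob_fT0_mult_less[OF M x]]] by (simp only:)
qed

lemma bcoef_vvec_sums_pos:
  assumes M: "entrywise_positive M" and x: "\<bar>x\<bar> < 1" and k: "k > 0"
  shows "(\<lambda>n. bcoef M k n * vvec x c n) sums
    complex_of_real (- ((- mob_f M x) ^ k) / real k + (- mob_f M 0) ^ k / real k)"
proof -
  define t where "t = mob_fT0 M"
  define a where "a = mob_f M 0"
  define p where "p = deriv (mob_f M) 0"
  define G where "G l n = real ((k - 1) choose (l - 1)) * (- a) ^ (k - l) * p ^ l *
     (real (n choose l) * t ^ (n - l) * (- ((- x) ^ n) / real n))" for l n
  have tx: "\<bar>t * x\<bar> < 1" unfolding t_def by (rule abs_mob_fT0_mult_less[OF M x])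
  have summand: "bcoef M k n * vvec x c n = complex_of_real (\<Sum>l=1..k. G l n)" for n
  proof (cases "n = 0")
    case False
    have "bcoef M k n * vvec x c n = complex_of_real ((\<Sum>l=1..min k n. real (n choose l) *
        real ((k - 1) choose (l - 1)) * t ^ (n - l) * (- a) ^ (k - l) * p ^ l) * (- ((- x) ^ n) / real n))"
      using False k by (simp add: bcoef_def vvec_def t_def a_def p_def)
    also have "\<dots> = complex_of_real (\<Sum>l=1..min k n. G l n)"
      unfolding sum_distrib_right G_def by (simp only: mult_ac)
    also have "(\<Sum>l=1..min k n. G l n) = (\<Sum>l=1..k. G l n)"
      by (rule sum.mono_neutral_left) (auto simp: G_def)
    finally show ?thesis .
  qed (use k in \<open>simp add: bcoef_def G_def\<close>)
  have "(\<lambda>n. \<Sum>l=1..k. G l n) sums (\<Sum>l=1..k. real ((k - 1) choose (l - 1)) * (- a) ^ (k - l) *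
      p ^ l * (- ((- x) ^ l) / (real l * (1 + t * x) ^ l)))"
  proof (rule sums_sum)
    fix l assume "l \<in> {1..k}"
    then obtain l' where l': "l = Suc l'" by (cases l) auto
    show "(\<lambda>n. G l n) sums (real ((k - 1) choose (l - 1)) * (- a) ^ (k - l) * p ^ l *
        (- ((- x) ^ l) / (real l * (1 + t * x) ^ l)))"
      unfolding G_def l' by (rule sums_mult[OF binomial_shift_sums[OF tx]])
  qed
  also have "mob_f M x = a + p * x / (1 + t * x)"
    unfolding a_def p_def t_def using x by (intro mob_f_eq_expansion[OF M]) simp
  then have "(\<Sum>l=1..k. real ((k - 1) choose (l - 1)) * (- a) ^ (k - l) * p ^ l *
      (- ((- x) ^ l) / (real l * (1 + t * x) ^ l))) = - ((- mob_f M x) ^ k) / real k + (- a) ^ k / real k"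
    by (simp only: binomial_pole_sum)
  finally show ?thesis
    unfolding summand a_def by (rule sums_of_real)
qed

lemma bcoef_vvec_sums:
  assumes M: "entrywise_positive M" and x: "\<bar>x\<bar> < 1"
  shows "(\<lambda>n. bcoef M k n * vvec x c n) sums (mob_vec M x k - mob_vec M 0 k)"
proof (cases "k = 0")
  case True
  then show ?thesis
    using bcoef_vvec_sums_0[OF M x] mob_ell_diff_0[OF M] x by (simp add: mob_vec_def vvec_def)
next
  case False
  then show ?thesis
    using bcoef_vvec_sums_pos[OF M x] by (simp add: mob_vec_def vvec_def)
qed

text \<open>\<open>dual_iter C p F n s g\<close> is the integral of \<open>g\<close> against the \<open>s\<close>-component of the
  \<open>n\<close>-th iterate of the mixing operator \<open>\<eta> \<mapsto> (\<Sum>\<^sub>r p r s \<cdot> (F r)\<^sub>*\<eta>\<^sub>r)\<^sub>s\<close>,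
  started at the point masses in \<open>0\<close>.\<close>

fun dual_iter :: "'r set \<Rightarrow> ('r \<Rightarrow> 'r \<Rightarrow> real) \<Rightarrow> ('r \<Rightarrow> real \<Rightarrow> real) \<Rightarrow> nat \<Rightarrow> 'r
    \<Rightarrow> (real \<Rightarrow> 'a::real_vector) \<Rightarrow> 'a" where
  "dual_iter C p F 0 s g = g 0"
| "dual_iter C p F (Suc n) s g = (\<Sum>r\<in>C. p r s *\<^sub>R dual_iter C p F n r (\<lambda>y. g (F r y)))"

lemma dual_iter_cong:
  assumes F: "\<And>r y. r \<in> C \<Longrightarrow> y \<in> I1 \<Longrightarrow> F r y \<in> I1" and gh: "\<And>y. y \<in> I1 \<Longrightarrow> g y = h y"
  shows "dual_iter C p F n s g = dual_iter C p F n s h"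
  using gh
proof (induction n arbitrary: s g h)
  case (Suc n)
  show ?case
    unfolding dual_iter.simps by (rule sum.cong[OF refl]) (use Suc F in \<open>metis\<close>)
qed simp

lemma dual_iter_diff:
  "dual_iter C p F n s (\<lambda>y. g y - h y) = dual_iter C p F n s g - dual_iter C p F n s h"
  by (induction n arbitrary: s g h) (simp_all add: sum_subtractf scaleR_diff_right)

lemma dual_iter_const:
  assumes "\<And>s. s \<in> C \<Longrightarrow> (\<Sum>r\<in>C. p r s) = 1" and "s \<in> C"
  shows "dual_iter C p F n s (\<lambda>y. c) = c"
  using assms(2)
proof (induction n arbitrary: s)
  case (Suc n)
  then have "dual_iter C p F (Suc n) s (\<lambda>y. c) = (\<Sum>r\<in>C. p r s) *\<^sub>R c"
    by (simp add: scaleR_sum_left)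
  then show ?case using assms(1) Suc.prems by simp
qed simp

lemma dual_iter_of_real:
  "dual_iter C p F n s (\<lambda>y. of_real (g y) :: 'a::real_algebra_1) = of_real (dual_iter C p F n s g)"
  by (induction n arbitrary: s g) (simp_all add: scaleR_conv_of_real)

lemma bcoef_dual_iter_sums:
  fixes G :: "real \<Rightarrow> nat \<Rightarrow> complex"
  assumes F: "\<And>r y. r \<in> C \<Longrightarrow> y \<in> I1 \<Longrightarrow> F r y \<in> I1"
    and G: "\<And>y. y \<in> I1 \<Longrightarrow> (\<lambda>m. bcoef M k m * G y m) sums H y"
  shows "(\<lambda>m. bcoef M k m * dual_iter C p F n s (\<lambda>y. G y m)) sums dual_iter C p F n s H"
  using G
proof (induction n arbitrary: s G H)
  case 0
  then show ?case by simp
next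
  case (Suc n)
  have "(\<lambda>m. \<Sum>r\<in>C. complex_of_real (p r s) * (bcoef M k m * dual_iter C p F n r (\<lambda>y. G (F r y) m)))
      sums (\<Sum>r\<in>C. complex_of_real (p r s) * dual_iter C p F n r (\<lambda>y. H (F r y)))"
    using Suc F by (intro sums_sum sums_mult) auto
  then show ?case
    by (simp add: scaleR_conv_of_real sum_distrib_left mult.left_commute)
qed

definition rev_kernel :: "('r \<Rightarrow> real) \<Rightarrow> ('r \<Rightarrow> 'r \<Rightarrow> real) \<Rightarrow> 'r \<Rightarrow> 'r \<Rightarrow> real" where
  "rev_kernel \<pi> Q r s = \<pi> r * Q r s / \<pi> s"

lemma stationary_qpow:
  assumes pi: "stationary C Q \<pi>" and fin: "finite C" and s: "s \<in> C"
  shows "(\<Sum>r\<in>C. \<pi> r * qpow C Q n r s) = \<pi> s"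
  using s
proof (induction n arbitrary: s)
  case 0
  have "(\<Sum>r\<in>C. \<pi> r * qpow C Q 0 r s) = (\<Sum>r\<in>C. if r = s then \<pi> r else 0)"
    by (rule sum.cong) auto
  then show ?case using 0 fin by simp
next
  case (Suc n)
  have "(\<Sum>r\<in>C. \<pi> r * qpow C Q (Suc n) r s) = (\<Sum>m\<in>C. (\<Sum>r\<in>C. \<pi> r * qpow C Q n r m) * Q m s)"
    unfolding qpow.simps sum_distrib_left sum_distrib_right by (subst sum.swap) (simp add: mult_ac)
  also have "\<dots> = (\<Sum>m\<in>C. \<pi> m * Q m s)" using Suc.IH by simp
  also have "\<dots> = \<pi> s" using pi Suc.prems unfolding stationary_def by blast
  finally show ?case .
qed

lemma stationary_pos:
  assumes Q: "stoch_irred_aperiodic C Q" and pi: "stationary C Q \<pi>" and s: "s \<in> C"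
  shows "\<pi> s > 0"
proof -
  have fin: "finite C" using Q unfolding stoch_irred_aperiodic_def by blast
  obtain N where N: "\<forall>r\<in>C. \<forall>r'\<in>C. qpow C Q N r r' > 0"
    using Q unfolding stoch_irred_aperiodic_def by blast
  have nonneg: "\<forall>r\<in>C. \<pi> r \<ge> 0" and one: "(\<Sum>r\<in>C. \<pi> r) = 1"
    using pi unfolding stationary_def by auto
  obtain r0 where r0: "r0 \<in> C" "\<pi> r0 > 0"
  proof (rule ccontr)
    assume "\<not> thesis"
    with that nonneg have "\<forall>r\<in>C. \<pi> r = 0" by force
    with one show False by simp
  qed
  have "0 < \<pi> r0 * qpow C Q N r0 s" using r0 N s by simp
  also have "\<dots> \<le> (\<Sum>r\<in>C. \<pi> r * qpow C Q N r s)"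
  proof (rule member_le_sum)
    show "0 \<le> \<pi> r * qpow C Q N r s" if "r \<in> C - {r0}" for r
      using that N s nonneg by (simp add: less_imp_le)
  qed (use fin r0 in auto)
  also have "\<dots> = \<pi> s" by (rule stationary_qpow[OF pi fin s])
  finally show ?thesis .
qed

lemma rev_kernel_nonneg:
  assumes Q: "stoch_irred_aperiodic C Q" and pi: "stationary C Q \<pi>" and "r \<in> C" "s \<in> C"
  shows "0 \<le> rev_kernel \<pi> Q r s"
  using assms stationary_pos[OF Q pi] unfolding stoch_irred_aperiodic_def stationary_def rev_kernel_def
  by auto

lemma rev_kernel_sum:
  assumes Q: "stoch_irred_aperiodic C Q" and pi: "stationary C Q \<pi>" and s: "s \<in> C"
  shows "(\<Sum>r\<in>C. rev_kernel \<pi> Q r s) = 1"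
proof -
  have "(\<Sum>r\<in>C. rev_kernel \<pi> Q r s) = (\<Sum>r\<in>C. \<pi> r * Q r s) / \<pi> s"
    unfolding rev_kernel_def by (simp add: sum_divide_distrib)
  then show ?thesis using pi s stationary_pos[OF Q pi s] unfolding stationary_def by simp
qed

lemma rev_kernel_weighted_sum:
  assumes Q: "stoch_irred_aperiodic C Q" and pi: "stationary C Q \<pi>" and r: "r \<in> C"
  shows "(\<Sum>s\<in>C. \<pi> s * rev_kernel \<pi> Q r s) = \<pi> r"
proof -
  have "(\<Sum>s\<in>C. \<pi> s * rev_kernel \<pi> Q r s) = \<pi> r * (\<Sum>s\<in>C. Q r s)"
    unfolding rev_kernel_def sum_distrib_left
    by (rule sum.cong[OF refl]) (use stationary_pos[OF Q pi] in force)
  then show ?thesis using Q r unfolding stoch_irred_aperiodic_def by simp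
qed

section \<open>A closed form for \<open>T\<^sup>n v\<close>\<close>

definition seed_iter :: "'r set \<Rightarrow> ('r \<Rightarrow> real) \<Rightarrow> ('r \<Rightarrow> 'r \<Rightarrow> real) \<Rightarrow> ('r \<Rightarrow> real^2^2)
    \<Rightarrow> nat \<Rightarrow> 'r \<Rightarrow> nat \<Rightarrow> complex" where
  "seed_iter C \<pi> Q B n s k = (\<Sum>r\<in>C. complex_of_real (rev_kernel \<pi> Q r s) *
     dual_iter C (rev_kernel \<pi> Q) (\<lambda>r. mob_f (B r)) n r (\<lambda>y. mob_vec (B r) y k))"

lemma vseed_eq_seed_iter_0: "vseed C \<pi> Q B = seed_iter C \<pi> Q B 0"
  by (simp add: fun_eq_iff vseed_def seed_iter_def rev_kernel_def mob_vec_def)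

lemma bcoef_seed_iter_sums:
  assumes Bpos: "\<forall>r\<in>C. entrywise_positive (B r)"
    and p1: "\<And>s. s \<in> C \<Longrightarrow> (\<Sum>r\<in>C. rev_kernel \<pi> Q r s) = 1"
    and s: "s \<in> C"
  shows "(\<lambda>m. bcoef (B s) k m * seed_iter C \<pi> Q B n s m) sums
    (dual_iter C (rev_kernel \<pi> Q) (\<lambda>r. mob_f (B r)) (Suc n) s (\<lambda>y. mob_vec (B s) y k) - mob_vec (B s) 0 k)"
proof -
  let ?p = "rev_kernel \<pi> Q" and ?F = "\<lambda>r. mob_f (B r)"
  have F: "\<And>r y. r \<in> C \<Longrightarrow> y \<in> I1 \<Longrightarrow> ?F r y \<in> I1" using Bpos mob_f_maps_I1 by blast
  have "(\<lambda>m. bcoef (B s) k m * dual_iter C ?p ?F n r (\<lambda>y. mob_vec (B r) y m)) sums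
      dual_iter C ?p ?F n r (\<lambda>y. mob_vec (B s) (?F r y) k - mob_vec (B s) 0 k)" if r: "r \<in> C" for r
  proof (rule bcoef_dual_iter_sums[OF F])
    fix y assume "y \<in> I1"
    then have "\<bar>?F r y\<bar> < 1" using F[OF r] by (auto simp: abs_less_iff)
    then show "(\<lambda>m. bcoef (B s) k m * mob_vec (B r) y m) sums (mob_vec (B s) (?F r y) k - mob_vec (B s) 0 k)"
      unfolding mob_vec_def[of "B r"] by (rule bcoef_vvec_sums[OF Bpos[rule_format, OF s]])
  qed
  then have "(\<lambda>m. \<Sum>r\<in>C. complex_of_real (?p r s) * (bcoef (B s) k m * dual_iter C ?p ?F n r (\<lambda>y. mob_vec (B r) y m)))
     sums (\<Sum>r\<in>C. complex_of_real (?p r s) *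
            (dual_iter C ?p ?F n r (\<lambda>y. mob_vec (B s) (?F r y) k) - mob_vec (B s) 0 k))"
    by (intro sums_sum sums_mult) (simp add: dual_iter_diff dual_iter_const[OF p1])
  moreover have "(\<Sum>r\<in>C. complex_of_real (?p r s) *
      (dual_iter C ?p ?F n r (\<lambda>y. mob_vec (B s) (?F r y) k) - mob_vec (B s) 0 k))
      = dual_iter C ?p ?F (Suc n) s (\<lambda>y. mob_vec (B s) y k) - of_real (\<Sum>r\<in>C. ?p r s) * mob_vec (B s) 0 k"
    by (simp add: scaleR_conv_of_real right_diff_distrib sum_subtractf sum_distrib_right)
  ultimately show ?thesis
    using p1[OF s] by (simp add: seed_iter_def sum_distrib_left mult.left_commute)
qed

lemma Tsys_diff:
  assumes "\<And>s k. s \<in> C \<Longrightarrow> summable (\<lambda>m. bcoef (B s) k m * U s m)"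
    and "\<And>s k. s \<in> C \<Longrightarrow> summable (\<lambda>m. bcoef (B s) k m * V s m)"
  shows "Tsys C \<pi> Q B (\<lambda>s k. U s k - V s k) = (\<lambda>s k. Tsys C \<pi> Q B U s k - Tsys C \<pi> Q B V s k)"
proof (intro ext)
  fix s' k
  have "Top (B s) (\<lambda>k. U s k - V s k) k = Top (B s) (U s) k - Top (B s) (V s) k" if "s \<in> C" for s
    unfolding Top_def using assms[OF that] by (simp add: right_diff_distrib suminf_diff)
  then show "Tsys C \<pi> Q B (\<lambda>s k. U s k - V s k) s' k = Tsys C \<pi> Q B U s' k - Tsys C \<pi> Q B V s' k"
    unfolding Tsys_def by (simp add: right_diff_distrib sum_subtractf)
qed

lemma Tsys_seed_iter:
  assumes Bpos: "\<forall>r\<in>C. entrywise_positive (B r)"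
    and p1: "\<And>s. s \<in> C \<Longrightarrow> (\<Sum>r\<in>C. rev_kernel \<pi> Q r s) = 1"
  shows "Tsys C \<pi> Q B (seed_iter C \<pi> Q B n) =
    (\<lambda>s k. seed_iter C \<pi> Q B (Suc n) s k - seed_iter C \<pi> Q B 0 s k)"
proof (intro ext)
  fix s' k
  let ?D = "\<lambda>s. dual_iter C (rev_kernel \<pi> Q) (\<lambda>r. mob_f (B r)) (Suc n) s (\<lambda>y. mob_vec (B s) y k)"
  have "Top (B s) (seed_iter C \<pi> Q B n s) k = ?D s - mob_vec (B s) 0 k" if "s \<in> C" for s
    unfolding Top_def using bcoef_seed_iter_sums[OF Bpos p1 that] by (rule sums_unique[symmetric])
  then have "Tsys C \<pi> Q B (seed_iter C \<pi> Q B n) s' k =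
      (\<Sum>s\<in>C. complex_of_real (rev_kernel \<pi> Q s s') * (?D s - mob_vec (B s) 0 k))"
    unfolding Tsys_def rev_kernel_def by simp
  also have "\<dots> = seed_iter C \<pi> Q B (Suc n) s' k - seed_iter C \<pi> Q B 0 s' k"
    unfolding seed_iter_def by (simp add: right_diff_distrib sum_subtractf del: dual_iter.simps(2))
  finally show "Tsys C \<pi> Q B (seed_iter C \<pi> Q B n) s' k =
      seed_iter C \<pi> Q B (Suc n) s' k - seed_iter C \<pi> Q B 0 s' k" .
qed

lemma Tsys_pow_Suc_vseed:
  assumes Bpos: "\<forall>r\<in>C. entrywise_positive (B r)"
    and p1: "\<And>s. s \<in> C \<Longrightarrow> (\<Sum>r\<in>C. rev_kernel \<pi> Q r s) = 1"
  shows "(Tsys C \<pi> Q B ^^ Suc n) (vseed C \<pi> Q B) =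
    (\<lambda>s k. seed_iter C \<pi> Q B (Suc n) s k - seed_iter C \<pi> Q B n s k)"
proof (induction n)
  case 0
  show ?case by (simp add: vseed_eq_seed_iter_0 Tsys_seed_iter[OF Bpos p1])
next
  case (Suc n)
  have "summable (\<lambda>m. bcoef (B s) k m * seed_iter C \<pi> Q B j s m)" if "s \<in> C" for s k j
    using bcoef_seed_iter_sums[OF Bpos p1 that] by (rule sums_summable)
  then show ?case
    using Suc.IH by (simp add: Tsys_diff Tsys_seed_iter[OF Bpos p1])
qed

lemma bracket0_seed_iter:
  assumes Bpos: "\<forall>r\<in>C. entrywise_positive (B r)"
    and weights: "\<And>r. r \<in> C \<Longrightarrow> (\<Sum>s\<in>C. \<pi> s * rev_kernel \<pi> Q r s) = \<pi> r"
  shows "bracket0 C \<pi> (seed_iter C \<pi> Q B n) =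
    of_real (\<Sum>r\<in>C. \<pi> r * dual_iter C (rev_kernel \<pi> Q) (\<lambda>r. mob_f (B r)) n r (mob_ln (B r)))"
proof -
  let ?D = "\<lambda>r. dual_iter C (rev_kernel \<pi> Q) (\<lambda>r. mob_f (B r)) n r (mob_ln (B r))"
  have "dual_iter C (rev_kernel \<pi> Q) (\<lambda>r. mob_f (B r)) n r (\<lambda>y. mob_vec (B r) y 0) = of_real (?D r)"
    if r: "r \<in> C" for r
  proof -
    have "dual_iter C (rev_kernel \<pi> Q) (\<lambda>r. mob_f (B r)) n r (\<lambda>y. mob_vec (B r) y 0) =
        dual_iter C (rev_kernel \<pi> Q) (\<lambda>r. mob_f (B r)) n r (\<lambda>y. of_real (mob_ln (B r) y))"
      using Bpos r mob_f_maps_I1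
      by (intro dual_iter_cong) (auto simp: mob_vec_def vvec_def mob_ell_eq_mob_ln)
    then show ?thesis by (simp add: dual_iter_of_real)
  qed
  then have "bracket0 C \<pi> (seed_iter C \<pi> Q B n) =
      of_real (\<Sum>s\<in>C. \<pi> s * (\<Sum>r\<in>C. rev_kernel \<pi> Q r s * ?D r))"
    by (simp add: bracket0_def seed_iter_def)
  also have "(\<Sum>s\<in>C. \<pi> s * (\<Sum>r\<in>C. rev_kernel \<pi> Q r s * ?D r)) =
      (\<Sum>r\<in>C. (\<Sum>s\<in>C. \<pi> s * rev_kernel \<pi> Q r s) * ?D r)"
    unfolding sum_distrib_left sum_distrib_right by (subst sum.swap) (simp add: mult_ac)
  finally show ?thesis by (simp add: weights)
qed

lemma bracket0_diff:
  "bracket0 C \<pi> (\<lambda>s k. U s k - V s k) = bracket0 C \<pi> U - bracket0 C \<pi> V"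
  unfolding bracket0_def by (simp add: sum_subtractf right_diff_distrib)

lemma sums_telescoping:
  fixes X :: "nat \<Rightarrow> 'a::real_normed_vector"
  assumes "X \<longlonglongrightarrow> L" "a 0 = X 0" "\<And>n. a (Suc n) = X (Suc n) - X n"
  shows "a sums L"
proof -
  have "(\<lambda>n. a (Suc n)) sums (L - X 0)" using telescope_sums[OF assms(1)] assms(3) by simp
  then show ?thesis using assms(2) by (simp add: sums_Suc_iff)
qed

section \<open>Contraction of the hyperbolic metric\<close>

lemma abs_moebius_exp_derivative_le:
  fixes u v u' v' y :: real
  assumes pos: "u > 0" "v > 0" "u' > 0" "v' > 0" and "y > 0"
  shows "\<bar>u * y / (u * y + v) - u' * y / (u' * y + v')\<bar> \<le> \<bar>u * v' - v * u'\<bar> / (u * v' + v * u')"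
proof -
  have p: "u * y + v > 0" "u' * y + v' > 0" "u * v' + v * u' > 0"
    using assms by (auto intro!: add_pos_pos)
  have "u * y / (u * y + v) - u' * y / (u' * y + v') =
      (u * v' - v * u') * (y / ((u * y + v) * (u' * y + v')))"
    using p by (simp add: field_simps)
  then have "\<bar>u * y / (u * y + v) - u' * y / (u' * y + v')\<bar> =
      \<bar>u * v' - v * u'\<bar> * (y / ((u * y + v) * (u' * y + v')))"
    using p assms by (simp add: abs_mult)
  also have "\<dots> \<le> \<bar>u * v' - v * u'\<bar> * (1 / (u * v' + v * u'))"
  proof (rule mult_left_mono)
    have "y * (u * v' + v * u') \<le> (u * y + v) * (u' * y + v')"
      using assms by (simp add: algebra_simps)
    then show "y / ((u * y + v) * (u' * y + v')) \<le> 1 / (u * v' + v * u')"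
      using p by (simp add: divide_simps)
  qed simp
  finally show ?thesis by simp
qed

lemma lipschitz_ln_moebius_exp:
  fixes u v u' v' :: real
  assumes pos: "u > 0" "v > 0" "u' > 0" "v' > 0"
  shows "\<bar>(ln (u * exp t1 + v) - ln (u' * exp t1 + v')) - (ln (u * exp t2 + v) - ln (u' * exp t2 + v'))\<bar>
     \<le> \<bar>u * v' - v * u'\<bar> / (u * v' + v * u') * \<bar>t1 - t2\<bar>"
proof -
  define G where "G t = ln (u * exp t + v) - ln (u' * exp t + v')" for t
  define \<kappa> where "\<kappa> = \<bar>u * v' - v * u'\<bar> / (u * v' + v * u')"
  have deriv: "(G has_real_derivative (u * exp t / (u * exp t + v) - u' * exp t / (u' * exp t + v'))) (at t)"
    for t
  proof -
    have "u * exp t + v > 0" "u' * exp t + v' > 0" using pos by (auto intro!: add_pos_pos)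
    moreover have "((\<lambda>t. u * exp t + v) has_real_derivative u * exp t) (at t)"
      "((\<lambda>t. u' * exp t + v') has_real_derivative u' * exp t) (at t)"
      by (auto intro!: derivative_eq_intros)
    ultimately show ?thesis
      unfolding G_def[abs_def] using DERIV_diff[OF DERIV_chain2[OF DERIV_ln_divide] DERIV_chain2[OF DERIV_ln_divide]]
      by simp
  qed
  have key: "\<bar>G b - G a\<bar> \<le> \<kappa> * (b - a)" if ab: "a < b" for a b
  proof -
    obtain z where "G b - G a = (b - a) * (u * exp z / (u * exp z + v) - u' * exp z / (u' * exp z + v'))"
      using MVT2[OF ab, of G "\<lambda>t. u * exp t / (u * exp t + v) - u' * exp t / (u' * exp t + v')"] deriv
      by blast
    then have "\<bar>G b - G a\<bar> = (b - a) * \<bar>u * exp z / (u * exp z + v) - u' * exp z / (u' * exp z + v')\<bar>"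
      using ab by (simp add: abs_mult)
    also have "\<dots> \<le> (b - a) * \<kappa>"
      using ab pos unfolding \<kappa>_def by (intro mult_left_mono abs_moebius_exp_derivative_le) auto
    finally show ?thesis by (simp add: mult.commute)
  qed
  have "\<bar>G t1 - G t2\<bar> \<le> \<kappa> * \<bar>t1 - t2\<bar>"
    using key[of t1 t2] key[of t2 t1] by (cases t1 t2 rule: linorder_cases) (auto simp: abs_minus_commute)
  then show ?thesis unfolding G_def \<kappa>_def .
qed

lemma d_hyp_eq: "d_hyp y z = \<bar>2 * artanh y - 2 * artanh z\<bar>"
proof -
  have "2 * artanh y - 2 * artanh z = 2 * (artanh y - artanh z)" by simp
  then show ?thesis unfolding d_hyp_def by (simp only: abs_mult)
qed

lemma two_artanh_eq: "2 * artanh x = ln ((1 + x) / (1 - x))"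
  unfolding artanh_def by simp

lemma exp_two_artanh:
  fixes x :: real
  assumes "\<bar>x\<bar> < 1"
  shows "exp (2 * artanh x) = (1 + x) / (1 - x)"
  using assms unfolding two_artanh_eq by (simp add: abs_less_iff)

lemma two_artanh_mob_f:
  assumes M: "entrywise_positive M" and x: "\<bar>x\<bar> < 1"
  shows "2 * artanh (mob_f M x) =
    ln (mA M * exp (2 * artanh x) + mB M) - ln (mC M * exp (2 * artanh x) + mD M)"
proof -
  note pos = entrywise_positive_entries[OF M]
  have x1: "1 - x > 0" "1 + x > 0" using x by (auto simp: abs_less_iff)
  have d: "mob_gamma M * x + mob_delta M > 0" using mob_denom_pos[OF M] x by simp
  define P where "P = (1 + x) / (1 - x)"
  have P: "P > 0" "exp (2 * artanh x) = P" unfolding P_def using x1 exp_two_artanh[OF x] by auto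
  have "(1 + mob_f M x) / (1 - mob_f M x) =
      (mA M * (1 + x) + mB M * (1 - x)) / (mC M * (1 + x) + mD M * (1 - x))"
    using one_plus_mob_f[of M x] one_minus_mob_f[of M x] d by simp
  also have "\<dots> = ((mA M * P + mB M) * (1 - x)) / ((mC M * P + mD M) * (1 - x))"
  proof -
    have e: "1 + x = P * (1 - x)" unfolding P_def using x1 by simp
    show ?thesis unfolding e by (simp add: algebra_simps)
  qed
  also have "\<dots> = (mA M * P + mB M) / (mC M * P + mD M)"
    using x1 by simp
  finally have "(1 + mob_f M x) / (1 - mob_f M x) = (mA M * P + mB M) / (mC M * P + mD M)" .
  moreover have "mA M * P + mB M > 0" "mC M * P + mD M > 0" using pos P by (auto intro!: add_pos_pos)
  ultimately show ?thesis unfolding P(2) unfolding two_artanh_eq by (simp add: ln_div)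
qed

lemma mob_ln_eq_exp_two_artanh:
  assumes M: "entrywise_positive M" and x: "\<bar>x\<bar> < 1"
  shows "mob_ln M x = ln ((mA M + mC M) * exp (2 * artanh x) + (mB M + mD M))
      - ln (1 * exp (2 * artanh x) + 1)"
proof -
  note pos = entrywise_positive_entries[OF M]
  have x1: "1 - x > 0" "1 + x > 0" using x by (auto simp: abs_less_iff)
  define P where "P = (1 + x) / (1 - x)"
  have P: "P > 0" "exp (2 * artanh x) = P" unfolding P_def using x1 exp_two_artanh[OF x] by auto
  have "mob_gamma M * x + mob_delta M = ((mA M + mC M) * P + (mB M + mD M)) / (1 * P + 1)"
    unfolding mob_denom_eq P_def using x1 by (simp add: field_simps)
  moreover have "(mA M + mC M) * P + (mB M + mD M) > 0" "1 * P + 1 > 0"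
    using pos P by (auto intro!: add_pos_pos)
  ultimately show ?thesis unfolding mob_ln_def P(2) by (simp add: ln_div)
qed

text \<open>In the coordinate \<open>t = 2 artanh x\<close> the map \<open>mob_f M\<close> becomes
  \<open>t \<mapsto> ln (a e\<^sup>t + b) - ln (c e\<^sup>t + d)\<close>, whose derivative is bounded by \<open>mob_lip M\<close>.\<close>

definition mob_lip :: "real^2^2 \<Rightarrow> real" where
  "mob_lip M = \<bar>mA M * mD M - mB M * mC M\<bar> / (mA M * mD M + mB M * mC M)"

lemma mob_lip_less_1:
  assumes "entrywise_positive M"
  shows "0 \<le> mob_lip M" "mob_lip M < 1"
proof -
  have q: "mA M * mD M > 0" "mB M * mC M > 0" using entrywise_positive_entries[OF assms] by auto
  then have "\<bar>mA M * mD M - mB M * mC M\<bar> < mA M * mD M + mB M * mC M" by (auto simp: abs_less_iff)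
  with q show "0 \<le> mob_lip M" "mob_lip M < 1" unfolding mob_lip_def by (simp_all add: divide_less_eq)
qed

lemma d_hyp_mob_f_le:
  assumes M: "entrywise_positive M" and "\<bar>y\<bar> < 1" "\<bar>z\<bar> < 1"
  shows "d_hyp (mob_f M y) (mob_f M z) \<le> mob_lip M * d_hyp y z"
  using lipschitz_ln_moebius_exp[OF entrywise_positive_entries[OF M], of "2 * artanh y" "2 * artanh z"]
  unfolding d_hyp_eq two_artanh_mob_f[OF M assms(2)] two_artanh_mob_f[OF M assms(3)] mob_lip_def
  by simp

lemma mob_ln_lipschitz:
  assumes M: "entrywise_positive M" and y: "\<bar>y\<bar> < 1" and z: "\<bar>z\<bar> < 1"
  shows "\<bar>mob_ln M y - mob_ln M z\<bar> \<le> d_hyp y z"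
proof -
  have pos: "mA M + mC M > 0" "mB M + mD M > 0" using entrywise_positive_entries[OF M] by auto
  define k where "k = \<bar>(mA M + mC M) * 1 - (mB M + mD M) * 1\<bar> / ((mA M + mC M) * 1 + (mB M + mD M) * 1)"
  have "\<bar>mob_ln M y - mob_ln M z\<bar> \<le> k * \<bar>2 * artanh y - 2 * artanh z\<bar>"
    unfolding k_def mob_ln_eq_exp_two_artanh[OF M y] mob_ln_eq_exp_two_artanh[OF M z]
    by (rule lipschitz_ln_moebius_exp[OF pos zero_less_one zero_less_one])
  also have "\<dots> \<le> 1 * \<bar>2 * artanh y - 2 * artanh z\<bar>"
    unfolding k_def using pos by (intro mult_right_mono) (auto simp: divide_le_eq abs_le_iff)
  finally show ?thesis unfolding d_hyp_eq by simp
qed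

lemma abs_mob_ln_le:
  assumes M: "entrywise_positive M" and x: "\<bar>x\<bar> \<le> 1"
  shows "\<bar>mob_ln M x\<bar> \<le> \<bar>ln (mob_delta M - \<bar>mob_gamma M\<bar>)\<bar> + \<bar>ln (mob_delta M + \<bar>mob_gamma M\<bar>)\<bar>"
proof -
  have "\<bar>mob_gamma M * x\<bar> \<le> \<bar>mob_gamma M\<bar>" using x by (simp add: abs_mult mult_left_le)
  then have "mob_delta M - \<bar>mob_gamma M\<bar> \<le> mob_gamma M * x + mob_delta M"
    "mob_gamma M * x + mob_delta M \<le> mob_delta M + \<bar>mob_gamma M\<bar>"
    by (auto simp: abs_le_iff)
  moreover have "mob_delta M - \<bar>mob_gamma M\<bar> > 0" using abs_mob_gamma_less[OF M] by simp
  ultimately have "ln (mob_delta M - \<bar>mob_gamma M\<bar>) \<le> mob_ln M x" "mob_ln M x \<le> ln (mob_delta M + \<bar>mob_gamma M\<bar>)"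
    unfolding mob_ln_def by simp_all
  then show ?thesis by linarith
qed

lemma uniform_mob_lip:
  assumes "finite C" "\<forall>r\<in>C. entrywise_positive (B r)"
  obtains \<kappa> where "0 \<le> \<kappa>" "\<kappa> < 1" "\<And>r. r \<in> C \<Longrightarrow> mob_lip (B r) \<le> \<kappa>"
proof
  let ?\<kappa> = "Max (insert 0 ((\<lambda>r. mob_lip (B r)) ` C))"
  show "0 \<le> ?\<kappa>" using assms by simp
  show "mob_lip (B r) \<le> ?\<kappa>" if "r \<in> C" for r using assms that by simp
  show "?\<kappa> < 1" using assms mob_lip_less_1 by simp
qed

section \<open>Convergence of the dual iterates\<close>

lemma d_hyp_commute: "d_hyp x y = d_hyp y x"
  unfolding d_hyp_def by (simp add: abs_minus_commute)

lemma P1_D: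
  assumes "P1 \<mu>"
  shows "prob_space \<mu>" "sets \<mu> = sets borel" "AE x in \<mu>. x \<in> I1" "integrable \<mu> (\<lambda>x. d_hyp x 0)"
proof -
  show "prob_space \<mu>" "sets \<mu> = sets borel" "integrable \<mu> (\<lambda>x. d_hyp x 0)"
    using assms unfolding P1_def by auto
  have "emeasure \<mu> (UNIV - I1) = 0" "sets \<mu> = sets borel" using assms unfolding P1_def by auto
  then show "AE x in \<mu>. x \<in> I1" by (intro AE_I'[of "UNIV - I1"]) auto
qed

lemma measurable_sets_borel:
  "sets \<mu> = sets borel \<Longrightarrow> g \<in> borel_measurable borel \<Longrightarrow> g \<in> borel_measurable \<mu>"
  using measurable_cong_sets[of \<mu> borel borel borel] by auto

lemma mixture_eq_bind:
  fixes \<eta> :: "'r \<Rightarrow> real measure"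
  assumes fin: "finite C" and P: "\<And>r. pmf P r = (if r \<in> C then w r else 0)"
    and \<eta>: "\<And>r. r \<in> C \<Longrightarrow> prob_space (\<eta> r)" "\<And>r. r \<in> C \<Longrightarrow> sets (\<eta> r) = sets borel"
    and \<mu>: "prob_space \<mu>" "sets \<mu> = sets borel"
    and F: "\<And>r. r \<in> C \<Longrightarrow> F r \<in> borel_measurable borel"
    and mix: "\<And>A. A \<in> sets borel \<Longrightarrow> measure \<mu> A = (\<Sum>r\<in>C. w r * measure (\<eta> r) (F r -` A))"
    and K_def: "\<And>r. K r = (if r \<in> C then distr (\<eta> r) borel (F r) else return borel 0)"
  shows "\<mu> = measure_pmf P \<bind> K" and "K \<in> measurable (measure_pmf P) (subprob_algebra borel)"
    and "\<And>r. prob_space (K r)"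
proof -
  have F': "F r \<in> measurable (\<eta> r) borel" if "r \<in> C" for r
    using F \<eta>(2) that measurable_cong_sets[of "\<eta> r" borel borel borel] by auto
  show K: "prob_space (K r)" for r
    unfolding K_def using \<eta>(1) F' by (auto intro: prob_space.prob_space_distr prob_space_return)
  show Kmeas: "K \<in> measurable (measure_pmf P) (subprob_algebra borel)"
    using K by (auto simp: K_def space_subprob_algebra prob_space_imp_subprob_space)
  show "\<mu> = measure_pmf P \<bind> K"
  proof (rule measure_eqI)
    show "sets \<mu> = sets (measure_pmf P \<bind> K)" using \<mu>(2) by (simp add: K_def)
    fix A assume "A \<in> sets \<mu>"
    then have A: "A \<in> sets borel" using \<mu>(2) by simp
    have "emeasure (measure_pmf P \<bind> K) A = (\<integral>\<^sup>+r. emeasure (K r) A \<partial>measure_pmf P)"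
      by (rule emeasure_bind[OF _ Kmeas A]) simp
    also have "\<dots> = (\<Sum>r\<in>C. ennreal (pmf P r) * emeasure (K r) A)"
      unfolding nn_integral_measure_pmf by (rule nn_integral_count_space'[OF fin]) (auto simp: P)
    also have "\<dots> = (\<Sum>r\<in>C. ennreal (w r * measure (\<eta> r) (F r -` A)))"
    proof (rule sum.cong[OF refl])
      fix r assume r: "r \<in> C"
      have "space (\<eta> r) = UNIV" using sets_eq_imp_space_eq[OF \<eta>(2)[OF r]] by simp
      then have "emeasure (K r) A = ennreal (measure (\<eta> r) (F r -` A))"
        using r A \<eta>(1)[OF r] by (simp add: K_def emeasure_distr[OF F'[OF r] A] finite_measure.emeasure_eq_measure[OF prob_space.finite_measure])
      moreover have "0 \<le> w r" using P[of r] r pmf_nonneg[of P r] by simp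
      ultimately show "ennreal (pmf P r) * emeasure (K r) A = ennreal (w r * measure (\<eta> r) (F r -` A))"
        using r by (simp add: P ennreal_mult)
    qed
    also have "\<dots> = ennreal (\<Sum>r\<in>C. w r * measure (\<eta> r) (F r -` A))"
      using P pmf_nonneg[of P] by (intro sum_ennreal) (metis measure_nonneg mult_nonneg_nonneg)
    also have "\<dots> = emeasure \<mu> A"
      using mix[OF A] \<mu>(1) by (simp add: finite_measure.emeasure_eq_measure[OF prob_space.finite_measure])
    finally show "emeasure \<mu> A = emeasure (measure_pmf P \<bind> K) A" by simp
  qed
qed

lemma integral_finite_mixture:
  fixes \<eta> :: "'r \<Rightarrow> real measure" and g :: "real \<Rightarrow> real"
  assumes fin: "finite C" and w: "\<And>r. r \<in> C \<Longrightarrow> 0 \<le> w r" "(\<Sum>r\<in>C. w r) = 1"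
    and \<eta>: "\<And>r. r \<in> C \<Longrightarrow> prob_space (\<eta> r)" "\<And>r. r \<in> C \<Longrightarrow> sets (\<eta> r) = sets borel"
    and \<mu>: "prob_space \<mu>" "sets \<mu> = sets borel"
    and F: "\<And>r. r \<in> C \<Longrightarrow> F r \<in> borel_measurable borel"
    and mix: "\<And>A. A \<in> sets borel \<Longrightarrow> measure \<mu> A = (\<Sum>r\<in>C. w r * measure (\<eta> r) (F r -` A))"
    and g: "g \<in> borel_measurable borel" "\<And>x. \<bar>g x\<bar> \<le> Bd"
  shows "integral\<^sup>L \<mu> g = (\<Sum>r\<in>C. w r * integral\<^sup>L (\<eta> r) (\<lambda>x. g (F r x)))"
proof -
  define f where "f r = (if r \<in> C then w r else 0)" for r
  have f: "\<And>r. 0 \<le> f r" "(\<integral>\<^sup>+r. ennreal (f r) \<partial>count_space UNIV) = 1"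
    using w fin by (auto simp: f_def nn_integral_count_space_indicator[symmetric]
        nn_integral_count_space'[of C] sum_ennreal)
  define P where "P = embed_pmf f"
  have P: "pmf P r = (if r \<in> C then w r else 0)" for r
    unfolding P_def pmf_embed_pmf[OF f] f_def ..
  define K where "K r = (if r \<in> C then distr (\<eta> r) borel (F r) else return borel 0)" for r
  have bind: "\<mu> = measure_pmf P \<bind> K" "K \<in> measurable (measure_pmf P) (subprob_algebra borel)"
    "\<And>r. prob_space (K r)"
    using mixture_eq_bind[OF fin P _ _ \<mu> _ _ K_def] \<eta> F mix by blast+
  have "integral\<^sup>L \<mu> g = (\<integral>r. integral\<^sup>L (K r) g \<partial>measure_pmf P)"
    unfolding bind(1) using g bind(3)
    by (intro integral_bind[OF g(1) _ bind(2)]) (auto simp: prob_space.emeasure_space_1)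
  also have "\<dots> = (\<Sum>r\<in>C. pmf P r *\<^sub>R integral\<^sup>L (K r) g)"
    by (rule integral_measure_pmf[OF fin]) (auto simp: set_pmf_eq P split: if_splits)
  also have "\<dots> = (\<Sum>r\<in>C. w r * integral\<^sup>L (\<eta> r) (\<lambda>x. g (F r x)))"
  proof (rule sum.cong[OF refl])
    fix r assume r: "r \<in> C"
    have "F r \<in> measurable (\<eta> r) borel"
      using F[OF r] \<eta>(2)[OF r] measurable_cong_sets[of "\<eta> r" borel borel borel] by auto
    then show "pmf P r *\<^sub>R integral\<^sup>L (K r) g = w r * integral\<^sup>L (\<eta> r) (\<lambda>x. g (F r x))"
      using r g(1) by (simp add: P K_def integral_distr)
  qed
  finally show ?thesis .
qed

definition hyp_lipschitz :: "real \<Rightarrow> (real \<Rightarrow> real) \<Rightarrow> bool" where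
  "hyp_lipschitz L g \<longleftrightarrow> 0 \<le> L \<and> (\<forall>y\<in>I1. \<forall>z\<in>I1. \<bar>g y - g z\<bar> \<le> L * d_hyp y z)"

lemma P1_integral_lipschitz:
  assumes P: "P1 \<mu>" and g: "g \<in> borel_measurable borel" "\<And>x. x \<in> I1 \<Longrightarrow> \<bar>g x\<bar> \<le> Bd"
    and lip: "hyp_lipschitz L g"
  shows "\<bar>g 0 - integral\<^sup>L \<mu> g\<bar> \<le> L * integral\<^sup>L \<mu> (\<lambda>x. d_hyp x 0)"
proof -
  interpret prob_space \<mu> using P1_D(1)[OF P] .
  have "g \<in> borel_measurable \<mu>" using measurable_sets_borel[OF P1_D(2)[OF P] g(1)] .
  then have ig: "integrable \<mu> g"
    using P1_D(3)[OF P] g(2) by (intro integrable_const_bound[of _ Bd]) auto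
  have "\<bar>g 0 - integral\<^sup>L \<mu> g\<bar> = \<bar>integral\<^sup>L \<mu> (\<lambda>x. g 0 - g x)\<bar>"
    using ig by (simp add: prob_space)
  also have "\<dots> \<le> integral\<^sup>L \<mu> (\<lambda>x. \<bar>g 0 - g x\<bar>)" by (rule integral_abs_bound)
  also have "\<dots> \<le> integral\<^sup>L \<mu> (\<lambda>x. L * d_hyp x 0)"
  proof (rule integral_mono_AE)
    show "integrable \<mu> (\<lambda>x. \<bar>g 0 - g x\<bar>)" "integrable \<mu> (\<lambda>x. L * d_hyp x 0)"
      using ig P1_D(4)[OF P] by auto
    show "AE x in \<mu>. \<bar>g 0 - g x\<bar> \<le> L * d_hyp x 0"
      using P1_D(3)[OF P]
    proof eventually_elim
      case (elim x)
      then have "\<bar>g 0 - g x\<bar> \<le> L * d_hyp 0 x" using lip unfolding hyp_lipschitz_def by auto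
      then show ?case by (simp add: d_hyp_commute)
    qed
  qed
  finally show ?thesis by simp
qed

lemma hyp_lipschitz_mob_ln: "entrywise_positive M \<Longrightarrow> hyp_lipschitz 1 (mob_ln M)"
  unfolding hyp_lipschitz_def using mob_ln_lipschitz by (auto simp: abs_less_iff)

lemma integral_ln_norm1_mult_psi:
  assumes M: "entrywise_positive M" and P: "P1 \<mu>"
  shows "(\<integral>x. ln (norm1 (M *v psi x)) \<partial>\<mu>) = integral\<^sup>L \<mu> (mob_ln M)"
proof (rule integral_cong_AE)
  have "(\<lambda>x. ln (norm1 (M *v psi x))) \<in> borel_measurable borel"
    unfolding norm1_mult_psi_eq by measurable
  then show "(\<lambda>x. ln (norm1 (M *v psi x))) \<in> borel_measurable \<mu>" "mob_ln M \<in> borel_measurable \<mu>"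
    using P1_D(2)[OF P] borel_measurable_mob_ln by (auto intro: measurable_sets_borel)
  show "AE x in \<mu>. ln (norm1 (M *v psi x)) = mob_ln M x"
    using P1_D(3)[OF P] by eventually_elim (use M ln_norm1_mult_psi in auto)
qed

locale contracting_mixture =
  fixes C :: "'r set" and p :: "'r \<Rightarrow> 'r \<Rightarrow> real" and F :: "'r \<Rightarrow> real \<Rightarrow> real"
    and \<eta> :: "'r \<Rightarrow> real measure" and \<kappa> :: real
  assumes finite_C: "finite C"
    and p_nonneg: "\<And>r s. r \<in> C \<Longrightarrow> s \<in> C \<Longrightarrow> 0 \<le> p r s"
    and p_sum: "\<And>s. s \<in> C \<Longrightarrow> (\<Sum>r\<in>C. p r s) = 1"
    and P1_\<eta>: "\<And>r. r \<in> C \<Longrightarrow> P1 (\<eta> r)"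
    and F_measurable: "\<And>r. r \<in> C \<Longrightarrow> F r \<in> borel_measurable borel"
    and F_I1: "\<And>r y. r \<in> C \<Longrightarrow> y \<in> I1 \<Longrightarrow> F r y \<in> I1"
    and F_contraction:
      "\<And>r y z. r \<in> C \<Longrightarrow> y \<in> I1 \<Longrightarrow> z \<in> I1 \<Longrightarrow> d_hyp (F r y) (F r z) \<le> \<kappa> * d_hyp y z"
    and \<kappa>_nonneg: "0 \<le> \<kappa>" and \<kappa>_less_1: "\<kappa> < 1"
    and \<eta>_fixed_point: "\<And>s A. s \<in> C \<Longrightarrow> A \<in> sets borel \<Longrightarrow>
      measure (\<eta> s) A = (\<Sum>r\<in>C. p r s * measure (\<eta> r) (F r -` A))"
begin

lemma integral_fixed_point:
  assumes s: "s \<in> C" and g: "g \<in> borel_measurable borel" "\<And>x. x \<in> I1 \<Longrightarrow> \<bar>g x\<bar> \<le> Bd"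
  shows "integral\<^sup>L (\<eta> s) g = (\<Sum>r\<in>C. p r s * integral\<^sup>L (\<eta> r) (\<lambda>x. g (F r x)))"
proof -
  \<comment> \<open>\<open>g\<close> need only be bounded on \<open>I1\<close>, which carries every \<open>\<eta> r\<close>; truncate it there\<close>
  define h where "h x = indicator I1 x * g x" for x
  have h: "h \<in> borel_measurable borel" "\<And>x. \<bar>h x\<bar> \<le> max Bd 0"
    using g unfolding h_def by (measurable, auto simp: indicator_def le_max_iff_disj)
  have mixture: "integral\<^sup>L (\<eta> s) h = (\<Sum>r\<in>C. p r s * integral\<^sup>L (\<eta> r) (\<lambda>x. h (F r x)))"
    by (rule integral_finite_mixture[OF finite_C _ p_sum[OF s] _ _ P1_D(1,2)[OF P1_\<eta>[OF s]] _ _ h])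
      (use s p_nonneg P1_D P1_\<eta> F_measurable \<eta>_fixed_point in auto)
  have cong: "integral\<^sup>L \<mu> (\<lambda>x. h (G x)) = integral\<^sup>L \<mu> (\<lambda>x. g (G x))"
    if "P1 \<mu>" "G \<in> borel_measurable borel" "\<And>x. x \<in> I1 \<Longrightarrow> G x \<in> I1" for \<mu> G
  proof (rule integral_cong_AE)
    show "(\<lambda>x. h (G x)) \<in> borel_measurable \<mu>" "(\<lambda>x. g (G x)) \<in> borel_measurable \<mu>"
      using that(2) g(1) h(1) by (auto intro!: measurable_sets_borel[OF P1_D(2)[OF that(1)]])
    show "AE x in \<mu>. h (G x) = g (G x)"
      using P1_D(3)[OF that(1)] by eventually_elim (use that(3) in \<open>auto simp: h_def\<close>)
  qed
  have "integral\<^sup>L (\<eta> r) (\<lambda>x. h (F r x)) = integral\<^sup>L (\<eta> r) (\<lambda>x. g (F r x))" if "r \<in> C" for r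
    using that by (intro cong P1_\<eta> F_measurable F_I1)
  moreover have "integral\<^sup>L (\<eta> s) h = integral\<^sup>L (\<eta> s) g"
    using cong[of "\<eta> s" "\<lambda>x. x"] P1_\<eta>[OF s] by simp
  ultimately show ?thesis using mixture by simp
qed

lemma hyp_lipschitz_comp_F:
  assumes "r \<in> C" "hyp_lipschitz L g"
  shows "hyp_lipschitz (L * \<kappa>) (\<lambda>y. g (F r y))"
  unfolding hyp_lipschitz_def
proof (intro conjI ballI)
  show "0 \<le> L * \<kappa>" using assms(2) \<kappa>_nonneg by (simp add: hyp_lipschitz_def)
  fix y z assume "y \<in> I1" "z \<in> I1"
  then have "\<bar>g (F r y) - g (F r z)\<bar> \<le> L * d_hyp (F r y) (F r z)"
    using assms F_I1 by (simp add: hyp_lipschitz_def)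
  also have "\<dots> \<le> L * (\<kappa> * d_hyp y z)"
    using assms \<open>y \<in> I1\<close> \<open>z \<in> I1\<close> by (intro mult_left_mono F_contraction) (auto simp: hyp_lipschitz_def)
  finally show "\<bar>g (F r y) - g (F r z)\<bar> \<le> L * \<kappa> * d_hyp y z" by (simp add: mult.assoc)
qed

lemma dual_iter_error:
  assumes "s \<in> C" "g \<in> borel_measurable borel" "\<And>x. x \<in> I1 \<Longrightarrow> \<bar>g x\<bar> \<le> Bd" "hyp_lipschitz L g"
  shows "\<bar>dual_iter C p F n s g - integral\<^sup>L (\<eta> s) g\<bar>
    \<le> L * \<kappa> ^ n * (\<Sum>r\<in>C. integral\<^sup>L (\<eta> r) (\<lambda>x. d_hyp x 0))"
  using assms
proof (induction n arbitrary: s g L)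
  case 0
  have "\<bar>g 0 - integral\<^sup>L (\<eta> s) g\<bar> \<le> L * integral\<^sup>L (\<eta> s) (\<lambda>x. d_hyp x 0)"
    using 0 P1_\<eta> by (intro P1_integral_lipschitz) auto
  also have "\<dots> \<le> L * (\<Sum>r\<in>C. integral\<^sup>L (\<eta> r) (\<lambda>x. d_hyp x 0))"
    using 0 finite_C
    by (intro mult_left_mono member_le_sum integral_nonneg) (auto simp: hyp_lipschitz_def d_hyp_def)
  finally show ?case by simp
next
  case (Suc n)
  let ?K = "\<Sum>r\<in>C. integral\<^sup>L (\<eta> r) (\<lambda>x. d_hyp x 0)"
  let ?e = "\<lambda>r. dual_iter C p F n r (\<lambda>y. g (F r y)) - integral\<^sup>L (\<eta> r) (\<lambda>y. g (F r y))"
  have "dual_iter C p F (Suc n) s g - integral\<^sup>L (\<eta> s) g = (\<Sum>r\<in>C. p r s * ?e r)"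
    using integral_fixed_point[OF Suc.prems(1-3)] by (simp add: sum_subtractf right_diff_distrib)
  also have "\<bar>\<dots>\<bar> \<le> (\<Sum>r\<in>C. p r s * (L * \<kappa> * \<kappa> ^ n * ?K))"
  proof (rule order_trans[OF sum_abs sum_mono])
    fix r assume r: "r \<in> C"
    have "\<bar>?e r\<bar> \<le> L * \<kappa> * \<kappa> ^ n * ?K"
      using Suc.prems F_measurable[OF r] F_I1[OF r] r
      by (intro Suc.IH hyp_lipschitz_comp_F[OF r]) (auto intro: measurable_compose)
    then show "\<bar>p r s * ?e r\<bar> \<le> p r s * (L * \<kappa> * \<kappa> ^ n * ?K)"
      using p_nonneg[OF r Suc.prems(1)] by (simp add: abs_mult mult_left_mono)
  qed
  also have "\<dots> = L * \<kappa> ^ Suc n * ?K"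
    using p_sum[OF Suc.prems(1)] by (simp add: sum_distrib_right[symmetric])
  finally show ?case .
qed

lemma dual_iter_tendsto:
  assumes "s \<in> C" "g \<in> borel_measurable borel" "\<And>x. x \<in> I1 \<Longrightarrow> \<bar>g x\<bar> \<le> Bd" "hyp_lipschitz L g"
  shows "(\<lambda>n. dual_iter C p F n s g) \<longlonglongrightarrow> integral\<^sup>L (\<eta> s) g"
proof -
  let ?K = "\<Sum>r\<in>C. integral\<^sup>L (\<eta> r) (\<lambda>x. d_hyp x 0)"
  have "(\<lambda>n. \<kappa> ^ n) \<longlonglongrightarrow> 0"
    using \<kappa>_nonneg \<kappa>_less_1 by (intro LIMSEQ_power_zero) simp
  then have "(\<lambda>n. L * \<kappa> ^ n * ?K) \<longlonglongrightarrow> L * 0 * ?K"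
    by (intro tendsto_mult tendsto_const)
  then have "(\<lambda>n. L * \<kappa> ^ n * ?K) \<longlonglongrightarrow> 0" by simp
  moreover have "\<forall>\<^sub>F n in sequentially. norm (dual_iter C p F n s g - integral\<^sup>L (\<eta> s) g) \<le> L * \<kappa> ^ n * ?K"
    using dual_iter_error[OF assms] by (intro always_eventually allI) simp
  ultimately have "(\<lambda>n. dual_iter C p F n s g - integral\<^sup>L (\<eta> s) g) \<longlonglongrightarrow> 0"
    by (rule Lim_null_comparison[rotated])
  then show ?thesis by (rule LIM_zero_cancel)
qed

end

lemma (in contracting_mixture) dual_iter_tendsto_mob_ln:
  assumes s: "s \<in> C" and M: "entrywise_positive M"
  shows "(\<lambda>n. dual_iter C p F n s (mob_ln M)) \<longlonglongrightarrow> integral\<^sup>L (\<eta> s) (mob_ln M)"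
proof (rule dual_iter_tendsto[OF s borel_measurable_mob_ln])
  show "\<bar>mob_ln M x\<bar> \<le> \<bar>ln (mob_delta M - \<bar>mob_gamma M\<bar>)\<bar> + \<bar>ln (mob_delta M + \<bar>mob_gamma M\<bar>)\<bar>"
    if "x \<in> I1" for x
    using that by (intro abs_mob_ln_le[OF M]) auto
  show "hyp_lipschitz 1 (mob_ln M)" by (rule hyp_lipschitz_mob_ln[OF M])
qed

lemma contracting_mixture_mob:
  assumes Q: "stoch_irred_aperiodic C Q" and pi: "stationary C Q \<pi>"
    and Bpos: "\<forall>r\<in>C. entrywise_positive (B r)" and eta_P1: "\<forall>r\<in>C. P1 (\<eta> r)"
    and eta_fix: "H_fixed C \<pi> Q B \<eta>"
    and \<kappa>: "0 \<le> \<kappa>" "\<kappa> < 1" "\<And>r. r \<in> C \<Longrightarrow> mob_lip (B r) \<le> \<kappa>"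
  shows "contracting_mixture C (rev_kernel \<pi> Q) (\<lambda>r. mob_f (B r)) \<eta> \<kappa>"
proof
  show "finite C" using Q unfolding stoch_irred_aperiodic_def by blast
  show "\<And>r s. r \<in> C \<Longrightarrow> s \<in> C \<Longrightarrow> 0 \<le> rev_kernel \<pi> Q r s" by (rule rev_kernel_nonneg[OF Q pi])
  show "\<And>s. s \<in> C \<Longrightarrow> (\<Sum>r\<in>C. rev_kernel \<pi> Q r s) = 1" by (rule rev_kernel_sum[OF Q pi])
  show "\<And>r. r \<in> C \<Longrightarrow> P1 (\<eta> r)" using eta_P1 by blast
  show "\<And>r. mob_f (B r) \<in> borel_measurable borel" by (rule borel_measurable_mob_f)
  show "\<And>r y. r \<in> C \<Longrightarrow> y \<in> I1 \<Longrightarrow> mob_f (B r) y \<in> I1" using Bpos mob_f_maps_I1 by blast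
  show "d_hyp (mob_f (B r) y) (mob_f (B r) z) \<le> \<kappa> * d_hyp y z" if "r \<in> C" "y \<in> I1" "z \<in> I1" for r y z
  proof -
    have "d_hyp (mob_f (B r) y) (mob_f (B r) z) \<le> mob_lip (B r) * d_hyp y z"
      using Bpos that by (intro d_hyp_mob_f_le) (auto simp: abs_less_iff)
    also have "\<dots> \<le> \<kappa> * d_hyp y z"
      using \<kappa>(3)[OF that(1)] by (intro mult_right_mono) (auto simp: d_hyp_def)
    finally show ?thesis .
  qed
  show "0 \<le> \<kappa>" "\<kappa> < 1" by (fact \<kappa>(1,2))+
  show "\<And>s A. s \<in> C \<Longrightarrow> A \<in> sets borel \<Longrightarrow>
      measure (\<eta> s) A = (\<Sum>r\<in>C. rev_kernel \<pi> Q r s * measure (\<eta> r) (mob_f (B r) -` A))"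
    using eta_fix unfolding H_fixed_def rev_kernel_def by simp
qed

theorem proposition3p12:
  fixes C :: "'r set" and Q :: "'r \<Rightarrow> 'r \<Rightarrow> real" and \<pi> :: "'r \<Rightarrow> real"
    and B :: "'r \<Rightarrow> real^2^2" and \<eta> :: "'r \<Rightarrow> real measure"
  assumes Q: "stoch_irred_aperiodic C Q"
    and pi: "stationary C Q \<pi>"
    and Bpos: "\<forall>r\<in>C. entrywise_positive (B r)"
    and eta_P1: "\<forall>r\<in>C. P1 (\<eta> r)"
    and eta_fix: "H_fixed C \<pi> Q B \<eta>"
  shows "(\<lambda>n. bracket0 C \<pi> ((Tsys C \<pi> Q B ^^ n) (vseed C \<pi> Q B)))
           sums complex_of_real
             (\<Sum>r\<in>C. \<pi> r * (\<integral>x. ln (norm1 (B r *v psi x)) \<partial>\<eta> r))"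
proof -
  have fin: "finite C" using Q unfolding stoch_irred_aperiodic_def by blast
  obtain \<kappa> where \<kappa>: "0 \<le> \<kappa>" "\<kappa> < 1" "\<And>r. r \<in> C \<Longrightarrow> mob_lip (B r) \<le> \<kappa>"
    using uniform_mob_lip[OF fin Bpos] by blast
  interpret contracting_mixture C "rev_kernel \<pi> Q" "\<lambda>r. mob_f (B r)" \<eta> \<kappa>
    by (rule contracting_mixture_mob[OF Q pi Bpos eta_P1 eta_fix \<kappa>])
  define X where "X n = (\<Sum>r\<in>C. \<pi> r * dual_iter C (rev_kernel \<pi> Q) (\<lambda>r. mob_f (B r)) n r (mob_ln (B r)))"
    for n
  have "(\<lambda>n. complex_of_real (X n)) \<longlonglongrightarrow> of_real (\<Sum>r\<in>C. \<pi> r * integral\<^sup>L (\<eta> r) (mob_ln (B r)))"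
    unfolding X_def using Bpos
    by (intro tendsto_of_real tendsto_sum tendsto_mult_left dual_iter_tendsto_mob_ln) auto
  also have "(\<Sum>r\<in>C. \<pi> r * integral\<^sup>L (\<eta> r) (mob_ln (B r))) =
      (\<Sum>r\<in>C. \<pi> r * (\<integral>x. ln (norm1 (B r *v psi x)) \<partial>\<eta> r))"
    using Bpos eta_P1 by (simp add: integral_ln_norm1_mult_psi)
  finally show ?thesis
    using bracket0_seed_iter[OF Bpos rev_kernel_weighted_sum[OF Q pi], folded X_def]
      Tsys_pow_Suc_vseed[OF Bpos rev_kernel_sum[OF Q pi]]
    by (intro sums_telescoping) (simp_all add: vseed_eq_seed_iter_0 bracket0_diff)
qed

end
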